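(* Consider the following local network approximation algorithm run by every process in a synchronous system. If, at the end of some round $r$, the graph $A_p|t$ of process $p$ contains the edge $(v\to w)$, then (i) $(v\to w)\in\mathcal{G}^t$, i.e., $A_p|t\subseteq\mathcal{G}^t$; and (ii) $A_p|t$ also contains the edge $(v'\to w)$ for every $v'\in\mathcal{N}_w^t$.
   Context: A finite set $\Pi$ of $n\ge2$ processes computes in synchronous lock-step rounds $r=1,2,\dots$. An adversary fixes an arbitrary infinite sequence of simple directed graphs $\mathcal{G}^1,\mathcal{G}^2,\dots$ on vertex set $\Pi$; $(p\to q)\in\mathcal{G}^r$ iff $q$ receives $p$'s round-$r$ message in round $r$. In each round every process broadcasts one message, received exactly by its out-neighbours in $\mathcal{G}^r$, and then updates its state based on the messages received in that round. Let $\mathcal{N}_p^r=\{q:(q\to p)\in\mathcal{G}^r\}$. Algorithm: each process $p$ maintains a directed graph $A_p=(V_p,E_p)$ without loops or multi-edges whose edges carry labels that are sets of round numbers; initially $A_p=(\{p\},\emptyset)$. In round $r$, $p$ sends its current $A_p$ to all its out-neighbours, and then, for each $q\in\mathcal{N}_p^r$ with received graph $A_q$: if $E_p$ contains an edge $(q\to p)$ with label $T$, its label is replaced by $T\cup\{r\}$, otherwise the edge $(q\to p)$ with label $\{r\}$ is added; and $V_p\leftarrow V_p\cup V_q$. Afterwards, for every pair of distinct nodes $(p_i,p_j)\in V_p\times V_p$, let $T'$ be the union of the labels $S$ of all edges $(p_i\to p_j)$ in the received graphs $A_q$, $q\in\mathcal{N}_p^r$; if $T'\neq\emptyset$, the label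 $T$ of the edge $(p_i\to p_j)$ in $E_p$ is replaced by $T\cup T'$, or the edge $(p_i\to p_j)$ with label $T'$ is added if no such edge exists. For a round $t$, $A_p|t$ denotes the graph whose edges are the edges of $A_p$ whose label contains $t$. *)

theory Defs
  imports Main
begin

(* A communication pattern: G r is the set of directed edges (p,q) of round r
   (q receives p's round-r message).  Simple graphs: no self-loops. *)
definition simple_pattern :: "(nat \<Rightarrow> ('p \<times> 'p) set) \<Rightarrow> bool" where
  "simple_pattern G \<longleftrightarrow> (\<forall>r p. (p, p) \<notin> G r)"

definition in_nbrs :: "(nat \<Rightarrow> ('p \<times> 'p) set) \<Rightarrow> nat \<Rightarrow> 'p \<Rightarrow> 'p set" where
  "in_nbrs G r p = {q. (q, p) \<in> G r}"

(* Local state A_p = (V_p, E_p) of process p at the end of round r (r = 0: initial state).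
   E_p is represented by its labelling: lbl a b is the label set of edge (a -> b);
   the edge is present iff its label is non-empty. *)
primrec alg_state :: "(nat \<Rightarrow> ('p \<times> 'p) set) \<Rightarrow> nat \<Rightarrow> 'p \<Rightarrow> 'p set \<times> ('p \<Rightarrow> 'p \<Rightarrow> nat set)" where
  "alg_state G 0 p = ({p}, (\<lambda>_ _. {}))"
| "alg_state G (Suc r) p =
     (let N = in_nbrs G (Suc r) p;
          V' = fst (alg_state G r p) \<union> (\<Union>q\<in>N. fst (alg_state G r q));
          L1 = (\<lambda>a b. snd (alg_state G r p) a b \<union>
                       (if b = p \<and> a \<in> N then {Suc r} else {}));
          L2 = (\<lambda>a b. L1 a b \<union>
                       (if a \<in> V' \<and> b \<in> V' \<and> a \<noteq> b
                        then (\<Union>q\<in>N. snd (alg_state G r q) a b) else {}))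
      in (V', L2))"

definition restr_graph :: "(nat \<Rightarrow> ('p \<times> 'p) set) \<Rightarrow> nat \<Rightarrow> 'p \<Rightarrow> nat \<Rightarrow> ('p \<times> 'p) set" where
  "restr_graph G r p t = {(a, b). t \<in> snd (alg_state G r p) a b}"

end

theory Submission
  imports Defs
begin

text \<open>Both claims are proved together, as an invariant of the local states, by induction on
  the round. A label entry t on an edge (a \<rightarrow> b) is created in only two ways. Either b received
  a's message in round t, and in that same round b adds the label t to the edges from all of
  its in-neighbours. Or the entry is copied from a neighbour's graph, where the invariant
  already gives the whole in-neighbourhood of b in round t. Because the pattern has no loops,
  that in-neighbourhood avoids b, so the copying rule copies all of it too; this needs the
  in-neighbours to be known vertices, which is why the invariant also records that.\<close>

definition sound_state :: "(nat \<Rightarrow> ('p \<times> 'p) set) \<Rightarrow> 'p set \<times> ('p \<Rightarrow> 'p \<Rightarrow> nat set) \<Rightarrow> bool" where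
  "sound_state G A \<longleftrightarrow>
     (\<forall>a b t. t \<in> snd A a b \<longrightarrow>
        (a, b) \<in> G t \<and> (\<forall>v \<in> in_nbrs G t b. v \<in> fst A \<and> t \<in> snd A v b))"

lemma alg_state_Suc_vertices:
  "fst (alg_state G (Suc r) p) =
     fst (alg_state G r p) \<union> (\<Union>q \<in> in_nbrs G (Suc r) p. fst (alg_state G r q))"
  by (simp add: Let_def)

lemma alg_state_Suc_labels:
  "snd (alg_state G (Suc r) p) a b =
     snd (alg_state G r p) a b \<union>
     (if b = p \<and> a \<in> in_nbrs G (Suc r) p then {Suc r} else {}) \<union>
     (if a \<in> fst (alg_state G (Suc r) p) \<and> b \<in> fst (alg_state G (Suc r) p) \<and> a \<noteq> b
      then \<Union>q \<in> in_nbrs G (Suc r) p. snd (alg_state G r q) a b else {})"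
  by (simp add: Let_def)

declare alg_state.simps(2) [simp del]

lemma self_in_alg_state_vertices: "p \<in> fst (alg_state G r p)"
  by (induction r) (simp_all add: alg_state_Suc_vertices)

lemma alg_state_vertices_mono: "fst (alg_state G r p) \<subseteq> fst (alg_state G (Suc r) p)"
  by (subst alg_state_Suc_vertices) blast

lemma alg_state_vertices_of_in_nbr:
  "q \<in> in_nbrs G (Suc r) p \<Longrightarrow> fst (alg_state G r q) \<subseteq> fst (alg_state G (Suc r) p)"
  by (subst alg_state_Suc_vertices) blast

lemma alg_state_labels_mono:
  "snd (alg_state G r p) a b \<subseteq> snd (alg_state G (Suc r) p) a b"
  by (subst alg_state_Suc_labels) blast

lemma in_nbrs_irrefl: "simple_pattern G \<Longrightarrow> v \<in> in_nbrs G t b \<Longrightarrow> v \<noteq> b"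
  by (auto simp: simple_pattern_def in_nbrs_def)

lemma sound_state_alg_state_Suc:
  assumes simple: "simple_pattern G"
    and IH: "\<And>q. sound_state G (alg_state G r q)"
  shows "sound_state G (alg_state G (Suc r) p)"
  unfolding sound_state_def
proof (intro allI impI)
  fix a b t
  assume label: "t \<in> snd (alg_state G (Suc r) p) a b"
  let ?N = "in_nbrs G (Suc r) p" and ?V = "fst (alg_state G (Suc r) p)"
  from label[unfolded alg_state_Suc_labels] consider
      (kept) "t \<in> snd (alg_state G r p) a b"
    | (received) "b = p" "a \<in> ?N" "t = Suc r"
    | (copied) q where "q \<in> ?N" "a \<in> ?V" "b \<in> ?V" "t \<in> snd (alg_state G r q) a b"
    by (auto split: if_splits)
  then show "(a, b) \<in> G t \<and>
    (\<forall>v \<in> in_nbrs G t b. v \<in> ?V \<and> t \<in> snd (alg_state G (Suc r) p) v b)"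
  proof cases
    case kept
    with IH[of p] have "(a, b) \<in> G t"
      and "\<forall>v \<in> in_nbrs G t b. v \<in> fst (alg_state G r p) \<and> t \<in> snd (alg_state G r p) v b"
      unfolding sound_state_def by blast+
    then show ?thesis
      using alg_state_vertices_mono[of G r p] alg_state_labels_mono[of G r p] by blast
  next
    case received
    have "v \<in> ?V \<and> t \<in> snd (alg_state G (Suc r) p) v b" if "v \<in> in_nbrs G t b" for v
    proof -
      from that received have v: "v \<in> ?N" by simp
      then have "v \<in> ?V"
        by (rule subsetD[OF alg_state_vertices_of_in_nbr self_in_alg_state_vertices])
      with v received show ?thesis
        by (simp add: alg_state_Suc_labels)
    qed
    with received show ?thesis by (simp add: in_nbrs_def)
  next
    case copied
    with IH[of q] have "(a, b) \<in> G t"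
      and nbrs: "\<forall>v \<in> in_nbrs G t b. v \<in> fst (alg_state G r q) \<and> t \<in> snd (alg_state G r q) v b"
      unfolding sound_state_def by blast+
    moreover have "v \<in> ?V \<and> t \<in> snd (alg_state G (Suc r) p) v b" if "v \<in> in_nbrs G t b" for v
    proof -
      have "v \<in> ?V" using nbrs that alg_state_vertices_of_in_nbr[OF copied(1)] by blast
      moreover have "v \<noteq> b" using in_nbrs_irrefl[OF simple that] .
      ultimately show ?thesis
        using nbrs that copied by (auto simp: alg_state_Suc_labels)
    qed
    ultimately show ?thesis by blast
  qed
qed

lemma sound_state_alg_state:
  "simple_pattern G \<Longrightarrow> sound_state G (alg_state G r p)"
proof (induction r arbitrary: p)
  case 0
  then show ?case by (simp add: sound_state_def)
next
  case (Suc r)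
  then show ?case by (blast intro: sound_state_alg_state_Suc)
qed

theorem lemma7:
  fixes G :: "nat \<Rightarrow> ('p::finite \<times> 'p) set"
  assumes "card (UNIV :: 'p set) \<ge> 2"
    and "simple_pattern G"
    and "(v, w) \<in> restr_graph G r p t"
  shows "(v, w) \<in> G t \<and> (\<forall>v' \<in> in_nbrs G t w. (v', w) \<in> restr_graph G r p t)"
  using sound_state_alg_state[OF assms(2), of r p] assms(3)
  unfolding sound_state_def restr_graph_def by blast

end
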